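(* Let $n\geq3$ and let $S_n$ act on $V=\mathbb{C}^n$ by its natural permutation representation. The pre-Drinfeld orbifold algebra maps for this action are exactly the linear $2$-cochains $\kappa^L=\kappa^L_1+\kappa^L_{\mathrm{tri}}$, where $\kappa^L_{\mathrm{tri}}$ is as defined below for some $a,b\in\mathbb{C}$ and $\kappa^L_1$ is supported on the identity with $\kappa^L_1(e_i,e_j)=a_1(e_i-e_j)$ for some $a_1\in\mathbb{C}$.
   Context: $S_n$ acts by $\sigma e_i=e_{\sigma(i)}$; $V^g$ is the fixed space of $g$; $\mathrm{Alt}_3$ is the set of cyclic permutations of $\{1,2,3\}$. A linear $2$-cochain is $\alpha=\sum_g\alpha_gg$ with $\alpha_g:\bigwedge^2V\to V$ linear; it is $S_n$-invariant if $h(\alpha_g(v,w))=\alpha_{hgh^{-1}}(hv,hw)$. A pre-Drinfeld orbifold algebra map is an $S_n$-invariant linear 2-cochain $\kappa^L$ with $\operatorname{im}\kappa^L_g\subseteq V^g$ for all $g$ and $\sum_{\sigma\in\mathrm{Alt}_3}\kappa^L_g(v_{\sigma(2)},v_{\sigma(3)})(gv_{\sigma(1)}-v_{\sigma(1)})=0$ in $S(V)$ for all $g,v_1,v_2,v_3$. $\kappa^L_{\mathrm{tri}}$ is the linear 2-cochain supported on 3-cycles with, for each 3-cycle $(ijk)$, $\kappa^L_{(ijk)}(e_i,e_j)=\kappa^L_{(ijk)}(e_j,e_k)=\kappa^L_{(ijk)}(e_k,e_i)=a(e_i+e_j+e_k)+b\sum_{l\notin\{i,j,k\}}e_l$ and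 $\kappa^L_{(ijk)}(e_l,e_m)=0$ whenever $e_l$ or $e_m$ lies in $V^{(ijk)}$. *)

theory Defs
  imports "HOL-Analysis.Analysis"
begin

text \<open>V = C^n, realised as complex ^ 'n with the finite index type 'n (n = CARD('n)).
  S_n = permutations of the index type.\<close>

type_synonym 'n cochain = "('n \<Rightarrow> 'n) \<Rightarrow> complex^'n \<Rightarrow> complex^'n \<Rightarrow> complex^'n"

definition ebas :: "'n::finite \<Rightarrow> complex^'n" where
  "ebas i = (\<chi> k. if k = i then 1 else 0)"

definition csmul :: "complex \<Rightarrow> complex^'n::finite \<Rightarrow> complex^'n" where
  "csmul c v = (\<chi> k. c * v $ k)"

text \<open>Permutation action: sigma e_i = e_(sigma i).\<close>
definition pact :: "('n::finite \<Rightarrow> 'n) \<Rightarrow> complex^'n \<Rightarrow> complex^'n" where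
  "pact \<sigma> v = (\<chi> k. v $ (inv \<sigma> k))"

definition clinear_map :: "(complex^'n::finite \<Rightarrow> complex^'n) \<Rightarrow> bool" where
  "clinear_map f \<longleftrightarrow> (\<forall>u v. f (u + v) = f u + f v) \<and> (\<forall>c v. f (csmul c v) = csmul c (f v))"

text \<open>A linear map \<And>^2 V \<rightarrow> V, i.e. an alternating bilinear map.\<close>
definition alt_bilinear :: "(complex^'n::finite \<Rightarrow> complex^'n \<Rightarrow> complex^'n) \<Rightarrow> bool" where
  "alt_bilinear f \<longleftrightarrow> (\<forall>v. clinear_map (f v)) \<and> (\<forall>w. clinear_map (\<lambda>v. f v w)) \<and> (\<forall>v. f v v = 0)"

text \<open>Product u*w of two vectors in S^2(V), represented as the symmetric tensor
  u \<otimes> w + w \<otimes> u (faithful embedding of S^2(V) in V \<otimes> V in characteristic 0).\<close>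
definition sprod :: "complex^'n::finite \<Rightarrow> complex^'n \<Rightarrow> complex^'n^'n" where
  "sprod u w = (\<chi> i j. u $ i * w $ j + u $ j * w $ i)"

definition pre_DOA_map :: "'n::finite cochain \<Rightarrow> bool" where
  "pre_DOA_map \<kappa> \<longleftrightarrow>
     (\<forall>g. g permutes (UNIV::'n set) \<longrightarrow> alt_bilinear (\<kappa> g)) \<and>
     (\<forall>g h v w. g permutes (UNIV::'n set) \<longrightarrow> h permutes (UNIV::'n set) \<longrightarrow>
        pact h (\<kappa> g v w) = \<kappa> (h \<circ> g \<circ> inv h) (pact h v) (pact h w)) \<and>
     (\<forall>g v w. g permutes (UNIV::'n set) \<longrightarrow> pact g (\<kappa> g v w) = \<kappa> g v w) \<and>
     (\<forall>g v1 v2 v3. g permutes (UNIV::'n set) \<longrightarrow>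
        sprod (\<kappa> g v2 v3) (pact g v1 - v1) + sprod (\<kappa> g v3 v1) (pact g v2 - v2)
          + sprod (\<kappa> g v1 v2) (pact g v3 - v3) = 0)"

definition is_3cycle :: "('n \<Rightarrow> 'n) \<Rightarrow> 'n \<Rightarrow> 'n \<Rightarrow> 'n \<Rightarrow> bool" where
  "is_3cycle g i j k \<longleftrightarrow> distinct [i, j, k] \<and> g i = j \<and> g j = k \<and> g k = i \<and>
     (\<forall>l. l \<notin> {i, j, k} \<longrightarrow> g l = l)"

text \<open>Values on basis pairs (e_l, e_m) of kappa_1 + kappa_tri.\<close>
definition kbasis :: "complex \<Rightarrow> complex \<Rightarrow> complex \<Rightarrow> ('n::finite \<Rightarrow> 'n) \<Rightarrow> 'n \<Rightarrow> 'n \<Rightarrow> complex^'n" where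
  "kbasis a b a1 g l m =
     (if g = id then csmul a1 (ebas l - ebas m)
      else if (\<exists>i j k. is_3cycle g i j k) then
        (let T = (\<chi> k. if g k \<noteq> k then a else b) in
         if g l = l \<or> g m = m then 0
         else if m = g l then T
         else if l = g m then - T
         else 0)
      else 0)"

definition kform :: "complex \<Rightarrow> complex \<Rightarrow> complex \<Rightarrow> 'n::finite cochain" where
  "kform a b a1 g v w = (\<Sum>l\<in>UNIV. \<Sum>m\<in>UNIV. csmul (v $ l * w $ m) (kbasis a b a1 g l m))"

end

theory Submission
  imports Defs
begin

text \<open>Conjugation-equivariance reduces each \<open>\<kappa>\<^sub>g\<close> to a few coefficients on one
  representative per conjugacy class. The remaining restrictions all come from one trick:
  applying a functional \<open>\<psi>\<close> that kills \<open>V\<^sup>g\<close> to the second tensor factor of the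
  cocycle condition leaves \<open>\<Sum> \<kappa>\<^sub>g(v\<^sub>2,v\<^sub>3) \<psi>(g v\<^sub>1 - v\<^sub>1) = 0\<close>, so \<open>\<kappa>\<^sub>g(v\<^sub>1,v\<^sub>2) = 0\<close>
  whenever \<open>\<psi>\<close> also kills \<open>g v\<^sub>1 - v\<^sub>1\<close>, \<open>g v\<^sub>2 - v\<^sub>2\<close> but not \<open>g v\<^sub>3 - v\<^sub>3\<close>. Suitable \<open>\<psi>\<close>
  exist for every pair of basis vectors unless \<open>g\<close> is the identity or a 3-cycle
  moving both of them. Conversely, on a 3-cycle \<open>(i j k)\<close> the form is
  \<open>D\<^sub>i\<^sub>j\<^sub>k(v,w) T\<close> with \<open>T\<close> fixed by \<open>g\<close>, and the cocycle condition reduces to a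
  polynomial identity in the coordinates \<open>i, j, k\<close>.\<close>

lemma csmul_nth [simp]: "csmul c v $ k = c * v $ k"
  by (simp add: csmul_def)

lemma pact_nth [simp]: "pact g v $ k = v $ inv g k"
  by (simp add: pact_def)

lemma ebas_nth: "ebas i $ k = (if k = i then 1 else 0)"
  by (simp add: ebas_def)

lemma sprod_nth [simp]: "sprod u w $ i $ j = u $ i * w $ j + u $ j * w $ i"
  by (simp add: sprod_def)

lemma pact_ebas: "g permutes UNIV \<Longrightarrow> pact g (ebas x) = ebas (g x)"
  unfolding vec_eq_iff by (auto simp: ebas_nth permutes_inverses)

lemma pact_add: "pact g (u + v) = pact g u + pact g v"
  unfolding vec_eq_iff by simp

lemma pact_csmul: "pact g (csmul c v) = csmul c (pact g v)"
  unfolding vec_eq_iff by simp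

lemma pact_fixed_nth:
  assumes "g permutes UNIV" "pact g P = P"
  shows "P $ g x = P $ x"
  using arg_cong[OF assms(2), of "\<lambda>P. P $ g x"] assms(1) by (simp add: permutes_inverses)

lemma csmul_csmul: "csmul a (csmul b v) = csmul (a * b) v"
  unfolding vec_eq_iff by simp

lemma csmul_sum: "csmul c (\<Sum>l\<in>A. u l) = (\<Sum>l\<in>A. csmul c (u l))"
  unfolding vec_eq_iff by (simp add: sum_component sum_distrib_left)

lemma vec_ebas_expansion: "v = (\<Sum>l\<in>UNIV. csmul (v $ l) (ebas (l::'n::finite)))"
  unfolding vec_eq_iff by (simp add: sum_component ebas_nth if_distrib cong: if_cong)

lemma vec_self_add_eq_0: "(x::complex^'n::finite) + x = 0 \<Longrightarrow> x = 0"
  unfolding vec_eq_iff by simp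

definition cdot :: "complex^'n::finite \<Rightarrow> complex^'n \<Rightarrow> complex" where
  "cdot u v = (\<Sum>k\<in>UNIV. u $ k * v $ k)"

lemma cdot_ebas_right [simp]: "cdot u (ebas y) = u $ y"
  by (simp add: cdot_def ebas_nth if_distrib cong: if_cong)

lemma cdot_commute: "cdot u v = cdot v u"
  by (simp add: cdot_def mult.commute)

lemma cdot_ebas_left [simp]: "cdot (ebas y) u = u $ y"
  by (simp add: cdot_commute[of "ebas y"])

lemma cdot_add_right [simp]: "cdot u (v + w) = cdot u v + cdot u w"
  by (simp add: cdot_def ring_distribs sum.distrib)

lemma cdot_diff_left [simp]: "cdot (v - w) u = cdot v u - cdot w u"
  by (simp add: cdot_def ring_distribs sum_subtractf)

lemma cdot_diff_right [simp]: "cdot u (v - w) = cdot u v - cdot u w"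
  by (simp add: cdot_def ring_distribs sum_subtractf)

lemma cdot_csmul_right [simp]: "cdot u (csmul c v) = c * cdot u v"
  by (simp add: cdot_def sum_distrib_left mult.left_commute)

subsection \<open>Alternating bilinear maps\<close>

context
  fixes f :: "complex^'n::finite \<Rightarrow> complex^'n \<Rightarrow> complex^'n"
  assumes f: "alt_bilinear f"
begin

lemma alt_bilinear_add_left: "f (u + v) w = f u w + f v w"
  and alt_bilinear_add_right: "f w (u + v) = f w u + f w v"
  and alt_bilinear_csmul_left: "f (csmul c u) w = csmul c (f u w)"
  and alt_bilinear_csmul_right: "f w (csmul c u) = csmul c (f w u)"
  and alt_bilinear_self: "f v v = 0"
  using f unfolding alt_bilinear_def clinear_map_def by blast+

lemma alt_bilinear_skew: "f v w = - f w v"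
proof -
  have "f (v + w) (v + w) = f v v + f v w + (f w v + f w w)"
    by (simp add: alt_bilinear_add_left alt_bilinear_add_right)
  then have "f v w + f w v = 0"
    by (simp add: alt_bilinear_self)
  then show ?thesis
    by (simp add: eq_neg_iff_add_eq_0)
qed

lemma alt_bilinear_sum_left: "finite A \<Longrightarrow> f (\<Sum>l\<in>A. u l) w = (\<Sum>l\<in>A. f (u l) w)"
proof (induction A rule: finite_induct)
  case empty
  show ?case using alt_bilinear_add_left[of 0 0 w] by simp
qed (simp add: alt_bilinear_add_left)

lemma alt_bilinear_sum_right: "finite A \<Longrightarrow> f w (\<Sum>l\<in>A. u l) = (\<Sum>l\<in>A. f w (u l))"
proof (induction A rule: finite_induct)
  case empty
  show ?case using alt_bilinear_add_right[of w 0 0] by simp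
qed (simp add: alt_bilinear_add_right)

lemma alt_bilinear_ebas_expansion:
  "f v w = (\<Sum>l\<in>UNIV. \<Sum>m\<in>UNIV. csmul (v $ l * w $ m) (f (ebas l) (ebas m)))"
proof -
  have "f v w = f (\<Sum>l\<in>UNIV. csmul (v $ l) (ebas l)) (\<Sum>m\<in>UNIV. csmul (w $ m) (ebas m))"
    using vec_ebas_expansion[of v] vec_ebas_expansion[of w] by simp
  also have "\<dots> = (\<Sum>m\<in>UNIV. \<Sum>l\<in>UNIV. csmul (v $ l * w $ m) (f (ebas l) (ebas m)))"
    by (simp add: alt_bilinear_sum_left alt_bilinear_sum_right alt_bilinear_csmul_left
        alt_bilinear_csmul_right csmul_csmul csmul_sum mult.commute)
  also have "\<dots> = (\<Sum>l\<in>UNIV. \<Sum>m\<in>UNIV. csmul (v $ l * w $ m) (f (ebas l) (ebas m)))"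
    by (rule sum.swap)
  finally show ?thesis .
qed

end

subsection \<open>Permutations and 3-cycles\<close>

lemma permutes_conjugate:
  "g permutes UNIV \<Longrightarrow> h permutes UNIV \<Longrightarrow> (h \<circ> g \<circ> inv h) permutes UNIV"
  by (intro permutes_compose permutes_inv) auto

lemma conjugate_self: "g permutes UNIV \<Longrightarrow> g \<circ> g \<circ> inv g = g"
  by (simp add: fun_eq_iff permutes_inverses)

lemma conjugate_id: "h permutes UNIV \<Longrightarrow> h \<circ> id \<circ> inv h = id"
  using permutes_inv_o(1) by simp

lemma conjugate_conjugate_inv:
  assumes "h permutes UNIV"
  shows "inv h \<circ> (h \<circ> g \<circ> inv h) \<circ> inv (inv h) = g"
  using assms by (simp add: fun_eq_iff permutes_inverses permutes_inv_inv)

lemma permutes_eq_iff: "g permutes UNIV \<Longrightarrow> g x = g y \<longleftrightarrow> x = y"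
  by (metis permutes_inj injD)

lemma exists_avoiding_two:
  fixes p q :: "'n::finite"
  assumes "CARD('n) \<ge> 3"
  obtains r where "r \<noteq> p" "r \<noteq> q"
proof -
  have "card {p, q} \<le> 2"
    by (simp add: card_insert_if)
  then have "{p, q} \<noteq> UNIV"
    using assms by auto
  then show ?thesis
    using that by blast
qed

lemma exists_three_distinct:
  assumes "CARD('n) \<ge> 3"
  obtains p q r :: "'n::finite" where "distinct [p, q, r]"
proof -
  obtain p :: 'n where True by simp
  obtain q where q: "q \<noteq> p" using exists_avoiding_two[OF assms, of p p] by blast
  obtain r where "r \<noteq> p" "r \<noteq> q" using exists_avoiding_two[OF assms, of p q] by blast
  with q show ?thesis using that[of p q r] by simp
qed

abbreviation swap :: "'a \<Rightarrow> 'a \<Rightarrow> 'a \<Rightarrow> 'a" where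
  "swap \<equiv> Transposition.transpose"

lemma swap_comp_permutes:
  assumes "f permutes UNIV"
  shows "(swap (f a) b \<circ> f) permutes UNIV" "(swap (f a) b \<circ> f) a = b"
    "f x \<noteq> f a \<Longrightarrow> f x \<noteq> b \<Longrightarrow> (swap (f a) b \<circ> f) x = f x"
  using assms by (auto intro: permutes_compose permutes_swap_id)

lemma permutation_extending_three:
  assumes "distinct [p, q, r]" and "distinct [i, j, k]"
  obtains h where "h permutes UNIV" "h p = i" "h q = j" "h r = k"
proof -
  define h1 where "h1 = swap (id p) i \<circ> id"
  have h1: "h1 permutes UNIV" "h1 p = i"
    using swap_comp_permutes[of id p i] unfolding h1_def by auto
  define h2 where "h2 = swap (h1 q) j \<circ> h1"
  have h2: "h2 permutes UNIV" "h2 q = j"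
    using swap_comp_permutes[OF h1(1), of q j] unfolding h2_def by auto
  have "h1 q \<noteq> h1 p" using assms(1) h1(1) by (auto simp: permutes_eq_iff)
  then have h2p: "h2 p = i"
    using swap_comp_permutes(3)[OF h1(1), of q j p] assms(2) h1(2) unfolding h2_def by auto
  define h3 where "h3 = swap (h2 r) k \<circ> h2"
  have "h2 p \<noteq> h2 r" "h2 q \<noteq> h2 r" using assms(1) h2(1) by (auto simp: permutes_eq_iff)
  moreover have "h2 p \<noteq> k" "h2 q \<noteq> k" using assms(2) h2p h2(2) by auto
  ultimately have "h3 p = i" "h3 q = j"
    using swap_comp_permutes(3)[OF h2(1), of _ r k] h2p h2(2) unfolding h3_def by auto
  moreover have "h3 permutes UNIV" "h3 r = k"
    using swap_comp_permutes[OF h2(1), of r k] unfolding h3_def by auto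
  ultimately show ?thesis using that by blast
qed

lemma is_3cycleD:
  assumes "is_3cycle g i j k"
  shows "distinct [i, j, k]" "g i = j" "g j = k" "g k = i"
    "\<And>l. l \<noteq> i \<Longrightarrow> l \<noteq> j \<Longrightarrow> l \<noteq> k \<Longrightarrow> g l = l"
  using assms unfolding is_3cycle_def by blast+

lemma id_3cycle_other_cases:
  obtains "g = id" | i j k where "is_3cycle g i j k" | "g \<noteq> id" "\<nexists>i j k. is_3cycle g i j k"
  by blast

lemma is_3cycle_not_id:
  assumes "is_3cycle g i j k"
  shows "g \<noteq> id"
proof
  assume "g = id"
  with is_3cycleD(1,2)[OF assms] show False by simp
qed

lemma is_3cycle_moved:
  assumes "is_3cycle g i j k" "g x \<noteq> x"
  shows "x = i \<or> x = j \<or> x = k"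
proof (rule ccontr)
  assume "\<not> (x = i \<or> x = j \<or> x = k)"
  then show False
    using is_3cycleD(5)[OF assms(1), of x] assms(2) by simp
qed

lemma is_3cycle_rotate:
  assumes "is_3cycle g i j k"
  shows "is_3cycle g j k i"
proof -
  note G = is_3cycleD[OF assms]
  have "distinct [j, k, i]" using G(1) by auto
  moreover have "\<forall>l. l \<notin> {j, k, i} \<longrightarrow> g l = l" using G(5) by blast
  ultimately show ?thesis
    unfolding is_3cycle_def using G(2-4) by blast
qed

lemma is_3cycle_at_moved:
  assumes g: "is_3cycle g i j k" and x: "g x \<noteq> x"
  shows "is_3cycle g x (g x) (g (g x))"
  using is_3cycle_moved[OF g x] is_3cycleD(2-4)[OF g]
    g is_3cycle_rotate[OF g] is_3cycle_rotate[OF is_3cycle_rotate[OF g]] by auto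

lemma is_3cycle_adjacent:
  assumes g: "is_3cycle g i j k" and "g l \<noteq> l" "g m \<noteq> m" "l \<noteq> m"
  shows "m = g l \<or> l = g m"
proof -
  have "l = i \<or> l = j \<or> l = k" "m = i \<or> m = j \<or> m = k"
    using is_3cycle_moved[OF g] assms(2,3) by blast+
  then show ?thesis
    using is_3cycleD(1-4)[OF g] assms(4) by (elim disjE) simp_all
qed

lemma is_3cycle_conjugate:
  assumes h: "h permutes UNIV" and c: "is_3cycle c p q r"
  shows "is_3cycle (h \<circ> c \<circ> inv h) (h p) (h q) (h r)"
proof -
  note C = is_3cycleD[OF c]
  have inv_h: "inv h (h x) = x" "h (inv h x) = x" for x
    using h by (simp_all add: permutes_inverses)
  have "(h \<circ> c \<circ> inv h) x = x" if "x \<notin> {h p, h q, h r}" for x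
    using that C(5)[of "inv h x"] inv_h by (metis comp_apply insertCI)
  then show ?thesis
    unfolding is_3cycle_def using C(1-4) inv_h permutes_eq_iff[OF h] by auto
qed

lemma is_3cycle_unique:
  assumes "is_3cycle g i j k" "is_3cycle g' i j k"
  shows "g = g'"
proof
  fix x
  show "g x = g' x"
    using is_3cycleD[OF assms(1)] is_3cycleD[OF assms(2)]
    by (cases "x = i \<or> x = j \<or> x = k") auto
qed

lemma conjugate_eq_3cycle:
  assumes g: "is_3cycle g i j k" and c: "is_3cycle c p q r" and h: "h permutes UNIV"
    and "h p = i" "h q = j" "h r = k"
  shows "h \<circ> c \<circ> inv h = g"
  using is_3cycle_unique[of "h \<circ> c \<circ> inv h" i j k g] is_3cycle_conjugate[OF h c] g assms(4-6)
  by simp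

definition cycle3 :: "'a \<Rightarrow> 'a \<Rightarrow> 'a \<Rightarrow> 'a \<Rightarrow> 'a" where
  "cycle3 p q r = swap p q \<circ> swap q r"

lemma is_3cycle_cycle3:
  assumes "distinct [p, q, r]"
  shows "is_3cycle (cycle3 p q r) p q r"
proof -
  have "\<forall>l. l \<notin> {p, q, r} \<longrightarrow> (swap p q \<circ> swap q r) l = l" by simp
  moreover have "r \<noteq> p" "r \<noteq> q" "q \<noteq> p" using assms by auto
  ultimately show ?thesis
    unfolding is_3cycle_def cycle3_def using assms by simp
qed

lemma cycle3_permutes: "cycle3 p q r permutes UNIV"
  unfolding cycle3_def by (intro permutes_compose permutes_swap_id) auto

lemma swap_conjugate_involution:
  assumes g: "g permutes UNIV" and gg: "g (g l) = l"
  shows "swap l (g l) \<circ> g \<circ> inv (swap l (g l)) = g"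
proof
  fix x
  consider "x = l" | "x = g l" | "x \<noteq> l" "x \<noteq> g l" by blast
  then show "(swap l (g l) \<circ> g \<circ> inv (swap l (g l))) x = g x"
  proof cases
    case 3
    then have "g x \<noteq> l" "g x \<noteq> g l"
      using gg permutes_eq_iff[OF g] by metis+
    with 3 show ?thesis by simp
  qed (simp_all add: gg)
qed

lemma not_3cycle_moves_outside:
  assumes g: "g permutes UNIV" and not3: "\<nexists>i j k. is_3cycle g i j k"
    and "g l \<noteq> l" "g (g l) \<noteq> l" "g (g (g l)) = l"
  obtains y where "g y \<noteq> y" "y \<noteq> l" "y \<noteq> g l" "y \<noteq> g (g l)"
proof -
  have "g l \<noteq> g (g l)" using assms(3) permutes_eq_iff[OF g] by simp
  then have "distinct [l, g l, g (g l)]" using assms(3,4) by simp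
  with not3 assms(5) have "\<not> (\<forall>y. y \<notin> {l, g l, g (g l)} \<longrightarrow> g y = y)"
    unfolding is_3cycle_def by blast
  then show ?thesis using that by blast
qed

definition tri_vec :: "complex \<Rightarrow> complex \<Rightarrow> ('n \<Rightarrow> 'n) \<Rightarrow> complex^'n::finite" where
  "tri_vec a b g = (\<chi> k. if g k \<noteq> k then a else b)"

lemma tri_vec_pact:
  assumes h: "h permutes UNIV"
  shows "pact h (tri_vec a b g) = tri_vec a b (h \<circ> g \<circ> inv h)"
  unfolding vec_eq_iff tri_vec_def
proof
  fix y
  have "h (g (inv h y)) = y \<longleftrightarrow> g (inv h y) = inv h y"
    using permutes_eq_iff[OF h, of "g (inv h y)" "inv h y"] h by (simp add: permutes_inverses)
  then show "pact h (\<chi> k. if g k \<noteq> k then a else b) $ y =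
      (\<chi> k. if (h \<circ> g \<circ> inv h) k \<noteq> k then a else b) $ y"
    by simp
qed

lemma kbasis_id: "kbasis a b a1 id l m = csmul a1 (ebas l - ebas m)"
  by (simp add: kbasis_def)

lemma kbasis_3cycle:
  assumes "is_3cycle g i j k"
  shows "kbasis a b a1 g l m =
    (if g l = l \<or> g m = m then 0 else if m = g l then tri_vec a b g
     else if l = g m then - tri_vec a b g else 0)"
  using is_3cycle_not_id[OF assms] assms unfolding kbasis_def tri_vec_def by auto

lemma kbasis_other:
  assumes "g \<noteq> id" "\<nexists>i j k. is_3cycle g i j k"
  shows "kbasis a b a1 g l m = 0"
  using assms unfolding kbasis_def by auto

subsection \<open>Pre-Drinfeld orbifold algebra maps are of the form \<open>kform\<close>\<close>

locale pre_DOA =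
  fixes \<kappa> :: "'n::finite cochain"
  assumes pre_DOA: "pre_DOA_map \<kappa>"
begin

lemma kappa_alt_bilinear: "g permutes UNIV \<Longrightarrow> alt_bilinear (\<kappa> g)"
  and kappa_equivariant: "g permutes UNIV \<Longrightarrow> h permutes UNIV \<Longrightarrow>
    pact h (\<kappa> g v w) = \<kappa> (h \<circ> g \<circ> inv h) (pact h v) (pact h w)"
  and kappa_fixed: "g permutes UNIV \<Longrightarrow> pact g (\<kappa> g v w) = \<kappa> g v w"
  and kappa_cocycle: "g permutes UNIV \<Longrightarrow>
    sprod (\<kappa> g v2 v3) (pact g v1 - v1) + sprod (\<kappa> g v3 v1) (pact g v2 - v2)
      + sprod (\<kappa> g v1 v2) (pact g v3 - v3) = 0"
  using pre_DOA unfolding pre_DOA_map_def by blast+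

lemma kappa_invariant: "g permutes UNIV \<Longrightarrow> \<kappa> g (pact g v) (pact g w) = \<kappa> g v w"
  using kappa_equivariant[of g g v w] kappa_fixed[of g v w] conjugate_self[of g] by simp

lemma kappa_cocycle_paired:
  assumes g: "g permutes UNIV" and \<psi>: "\<And>P. pact g P = P \<Longrightarrow> cdot P \<psi> = 0"
  shows "\<kappa> g v2 v3 $ r * cdot (pact g v1 - v1) \<psi> + \<kappa> g v3 v1 $ r * cdot (pact g v2 - v2) \<psi>
       + \<kappa> g v1 v2 $ r * cdot (pact g v3 - v3) \<psi> = 0"
proof -
  define P1 P2 P3 where "P1 = \<kappa> g v2 v3" "P2 = \<kappa> g v3 v1" "P3 = \<kappa> g v1 v2"
  define W1 W2 W3 where "W1 = pact g v1 - v1" "W2 = pact g v2 - v2" "W3 = pact g v3 - v3"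
  have P: "cdot P1 \<psi> = 0" "cdot P2 \<psi> = 0" "cdot P3 \<psi> = 0"
    unfolding P1_P2_P3_def by (rule \<psi>, rule kappa_fixed[OF g])+
  have "0 = (\<Sum>c\<in>UNIV. (sprod P1 W1 + sprod P2 W2 + sprod P3 W3) $ r $ c * \<psi> $ c)"
    unfolding P1_P2_P3_def W1_W2_W3_def by (simp add: kappa_cocycle[OF g])
  also have "\<dots> = P1 $ r * cdot W1 \<psi> + W1 $ r * cdot P1 \<psi> + P2 $ r * cdot W2 \<psi>
      + W2 $ r * cdot P2 \<psi> + P3 $ r * cdot W3 \<psi> + W3 $ r * cdot P3 \<psi>"
    by (simp add: cdot_def sum.distrib sum_distrib_left ring_distribs mult.assoc mult.left_commute)
  finally show ?thesis
    using P unfolding P1_P2_P3_def W1_W2_W3_def by simp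
qed

lemma kappa_vanishes_by_pairing:
  assumes g: "g permutes UNIV" and \<psi>: "\<And>P. pact g P = P \<Longrightarrow> cdot P \<psi> = 0"
    and "cdot (pact g u - u) \<psi> = 0" "cdot (pact g v - v) \<psi> = 0" "cdot (pact g w - w) \<psi> \<noteq> 0"
  shows "\<kappa> g u v = 0"
  unfolding vec_eq_iff
  using kappa_cocycle_paired[OF g \<psi>, of v w _ u] assms(3-5) by simp

lemma kappa_fixed_vectors:
  assumes g: "g permutes UNIV" "g \<noteq> id" and "pact g u = u" "pact g u' = u'"
  shows "\<kappa> g u u' = 0"
proof -
  obtain y where y: "g y \<noteq> y" using g(2) by (auto simp: fun_eq_iff)
  show ?thesis
  proof (rule kappa_vanishes_by_pairing[OF g(1), where \<psi> = "ebas y - ebas (g y)" and w = "ebas y"])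
    fix P assume "pact g P = P"
    then show "cdot P (ebas y - ebas (g y)) = 0" using pact_fixed_nth[OF g(1)] by simp
  qed (use assms y in \<open>simp_all add: pact_ebas ebas_nth\<close>)
qed

lemma kappa_fixed_ebas:
  assumes g: "g permutes UNIV" "g \<noteq> id" and u: "pact g u = u"
  shows "\<kappa> g u (ebas m) = 0"
proof -
  consider "g m = m" | "g m \<noteq> m" "g (g m) \<noteq> m" | "g m \<noteq> m" "g (g m) = m" by blast
  then show ?thesis
  proof cases
    case 1
    then show ?thesis using kappa_fixed_vectors[OF g u] pact_ebas[OF g(1), of m] by simp
  next
    case 2
    have "g (g m) \<noteq> g m" using 2 permutes_eq_iff[OF g(1)] by metis
    then show ?thesis
      using 2 u pact_fixed_nth[OF g(1)]
      by (intro kappa_vanishes_by_pairing[OF g(1),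
            where \<psi> = "ebas m + ebas (g m) - csmul 2 (ebas (g (g m)))" and w = "ebas (g m)"])
        (simp_all add: pact_ebas[OF g(1)] ebas_nth)
  next
    case 3
    \<comment> \<open>\<open>e\<^sub>m + e\<^sub>g\<^sub>m\<close> is fixed, while \<open>g\<close>-invariance makes the two summands equal\<close>
    have fixed: "pact g (ebas m + ebas (g m)) = ebas m + ebas (g m)"
      using 3 by (simp add: pact_add pact_ebas[OF g(1)])
    have "\<kappa> g u (ebas m) + \<kappa> g u (ebas (g m)) = 0"
      using kappa_fixed_vectors[OF g u fixed] alt_bilinear_add_right[OF kappa_alt_bilinear[OF g(1)]]
      by simp
    moreover have "\<kappa> g u (ebas (g m)) = \<kappa> g u (ebas m)"
      using kappa_invariant[OF g(1), of u "ebas m"] u by (simp add: pact_ebas[OF g(1)])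
    ultimately show ?thesis by (metis vec_self_add_eq_0)
  qed
qed

lemma ebas_kappa_fixed:
  assumes "g permutes UNIV" "g \<noteq> id" "pact g u = u"
  shows "\<kappa> g (ebas m) u = 0"
  using alt_bilinear_skew[OF kappa_alt_bilinear[OF assms(1)]] kappa_fixed_ebas[OF assms]
  by (metis neg_equal_0_iff_equal)

lemma kappa_fixed_point:
  assumes "g permutes UNIV" "g \<noteq> id" "g l = l \<or> g m = m"
  shows "\<kappa> g (ebas l) (ebas m) = 0"
  using assms kappa_fixed_ebas[OF assms(1,2), of "ebas l" m] ebas_kappa_fixed[OF assms(1,2), of "ebas m" l]
  by (auto simp: pact_ebas)

lemma kappa_2cycle_point:
  assumes g: "g permutes UNIV" "g \<noteq> id" and l: "g l \<noteq> l" "g (g l) = l"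
  shows "\<kappa> g (ebas l) (ebas m) = 0"
proof -
  have ab: "alt_bilinear (\<kappa> g)" by (rule kappa_alt_bilinear[OF g(1)])
  consider "m = l" | "m = g l" | "m \<noteq> l" "m \<noteq> g l" by blast
  then show ?thesis
  proof cases
    case 1
    then show ?thesis by (simp add: alt_bilinear_self[OF ab])
  next
    case 2
    have "\<kappa> g (ebas l) (ebas (g l)) = \<kappa> g (ebas (g l)) (ebas l)"
      using kappa_invariant[OF g(1), of "ebas l" "ebas (g l)"] l(2) by (simp add: pact_ebas[OF g(1)])
    then have "\<kappa> g (ebas l) (ebas (g l)) + \<kappa> g (ebas l) (ebas (g l)) = 0"
      using alt_bilinear_skew[OF ab, of "ebas (g l)" "ebas l"] by simp
    then show ?thesis using 2 vec_self_add_eq_0 by metis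
  next
    case 3
    \<comment> \<open>conjugating by the transposition \<open>(l g(l))\<close>, which commutes with \<open>g\<close>, gives
      \<open>X = - \<tau>X\<close> for \<open>X = \<kappa>\<^sub>g(e\<^sub>l, e\<^sub>m)\<close>, while \<open>X\<close> is \<open>g\<close>-fixed\<close>
    define h where "h = swap l (g l)"
    have h: "h permutes UNIV" unfolding h_def by (rule permutes_swap_id) auto
    have hg: "h \<circ> g \<circ> inv h = g" unfolding h_def by (rule swap_conjugate_involution[OF g(1) l(2)])
    define X where "X = \<kappa> g (ebas l) (ebas m)"
    have hm: "h m = m" "h l = g l" using 3 by (auto simp: h_def)
    have "pact h X = \<kappa> g (ebas (g l)) (ebas m)"
      unfolding X_def using kappa_equivariant[OF g(1) h, of "ebas l" "ebas m"] hg hm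
      by (simp add: pact_ebas[OF h])
    moreover have "pact g (ebas l + ebas (g l)) = ebas l + ebas (g l)"
      using l(2) by (simp add: pact_add pact_ebas[OF g(1)])
    then have "X + \<kappa> g (ebas (g l)) (ebas m) = 0"
      unfolding X_def alt_bilinear_add_left[OF ab, symmetric] by (rule kappa_fixed_ebas[OF g])
    ultimately have "X + pact h X = 0" by simp
    then have anti: "X $ k + X $ h k = 0" for k
      using h by (auto simp: vec_eq_iff permutes_inverses h_def)
    have "X $ g l = X $ l"
      using pact_fixed_nth[OF g(1) kappa_fixed[OF g(1)]] unfolding X_def by blast
    then have "X $ l = 0" "X $ g l = 0" using anti[of l] hm by simp_all
    moreover have "X $ k = 0" if "k \<noteq> l" "k \<noteq> g l" for k
      using anti[of k] that by (simp add: h_def)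
    ultimately show ?thesis unfolding X_def vec_eq_iff by (metis zero_index)
  qed
qed

lemma kappa_long_cycle_adjacent:
  assumes g: "g permutes UNIV" and not3: "\<nexists>i j k. is_3cycle g i j k"
    and l: "g l \<noteq> l" "g (g l) \<noteq> l"
  shows "\<kappa> g (ebas l) (ebas (g l)) = 0"
proof (cases "g (g (g l)) = l")
  case False
  have "g (g l) \<noteq> g l" "g (g (g l)) \<noteq> g (g l)" "g (g (g l)) \<noteq> g l"
    using l permutes_eq_iff[OF g] by metis+
  then show ?thesis
    using l False pact_fixed_nth[OF g]
    by (intro kappa_vanishes_by_pairing[OF g, where w = "ebas (g (g l))"
          and \<psi> = "ebas l + ebas (g l) + ebas (g (g l)) - csmul 3 (ebas (g (g (g l))))"])
      (simp_all add: pact_ebas[OF g] ebas_nth)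
next
  case True
  \<comment> \<open>\<open>l\<close> lies on a 3-cycle of \<open>g\<close>; since \<open>g\<close> is not that 3-cycle, it moves some other point\<close>
  obtain y where y: "g y \<noteq> y" "y \<noteq> l" "y \<noteq> g l" "y \<noteq> g (g l)"
    using not_3cycle_moves_outside[OF g not3 l True] by blast
  then have "g y \<noteq> l" "g y \<noteq> g l" "g y \<noteq> g (g l)"
    using True permutes_eq_iff[OF g] by metis+
  with y show ?thesis
    using pact_fixed_nth[OF g]
    by (intro kappa_vanishes_by_pairing[OF g, where \<psi> = "ebas y - ebas (g y)" and w = "ebas y"])
      (simp_all add: pact_ebas[OF g] ebas_nth)
qed

lemma kappa_long_cycle_second:
  assumes g: "g permutes UNIV" and l: "g l \<noteq> l" "g (g l) \<noteq> l" "g (g (g l)) \<noteq> l"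
  shows "\<kappa> g (ebas l) (ebas (g (g l))) = 0"
proof -
  have "g (g l) \<noteq> g l" "g (g (g l)) \<noteq> g (g l)" "g (g (g l)) \<noteq> g l"
    using l permutes_eq_iff[OF g] by metis+
  then show ?thesis
    using l pact_fixed_nth[OF g]
    by (intro kappa_vanishes_by_pairing[OF g, where w = "ebas (g l)"
          and \<psi> = "ebas l + ebas (g l) - ebas (g (g l)) - ebas (g (g (g l)))"])
      (simp_all add: pact_ebas[OF g] ebas_nth)
qed

lemma kappa_long_cycle_point:
  assumes g: "g permutes UNIV" and not3: "\<nexists>i j k. is_3cycle g i j k"
    and l: "g l \<noteq> l" "g (g l) \<noteq> l"
  shows "\<kappa> g (ebas l) (ebas m) = 0"
proof -
  have ab: "alt_bilinear (\<kappa> g)" by (rule kappa_alt_bilinear[OF g])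
  have gl: "g (g l) \<noteq> g l" using l permutes_eq_iff[OF g] by metis
  consider "m = l" | "m = g l" | "g m = l" | "m = g (g l)" "g m \<noteq> l"
    | "m \<noteq> l" "m \<noteq> g l" "g m \<noteq> l" "m \<noteq> g (g l)" by blast
  then show ?thesis
  proof cases
    case 1
    then show ?thesis by (simp add: alt_bilinear_self[OF ab])
  next
    case 2
    then show ?thesis using kappa_long_cycle_adjacent[OF g not3 l] by simp
  next
    case 3
    then have "g m \<noteq> m" "g (g m) \<noteq> m" using l by auto
    then have "\<kappa> g (ebas m) (ebas (g m)) = 0"
      by (rule kappa_long_cycle_adjacent[OF g not3])
    then show ?thesis using 3 alt_bilinear_skew[OF ab, of "ebas l" "ebas m"] by simp
  next
    case 4
    then show ?thesis using kappa_long_cycle_second[OF g l] by simp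
  next
    case 5
    have "g m \<noteq> g l" "g m \<noteq> g (g l)" using 5 permutes_eq_iff[OF g] by metis+
    with 5 show ?thesis
      using l gl pact_fixed_nth[OF g]
      by (intro kappa_vanishes_by_pairing[OF g, where w = "ebas (g l)"
            and \<psi> = "ebas l + ebas (g l) - csmul 2 (ebas (g (g l)))"])
        (simp_all add: pact_ebas[OF g] ebas_nth)
  qed
qed

lemma kappa_not_3cycle:
  assumes "g permutes UNIV" "g \<noteq> id" "\<nexists>i j k. is_3cycle g i j k"
  shows "\<kappa> g (ebas l) (ebas m) = 0"
  using kappa_fixed_point[OF assms(1,2)] kappa_2cycle_point[OF assms(1,2)]
    kappa_long_cycle_point[OF assms(1,3)] by blast

lemma kappa_id_ebas_nth_first:
  assumes card: "CARD('n) \<ge> 3" and "l \<noteq> m" "p \<noteq> q"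
  shows "\<kappa> id (ebas l) (ebas (m::'n)) $ l = \<kappa> id (ebas p) (ebas q) $ p"
proof -
  obtain r where r: "r \<noteq> p" "r \<noteq> q" using exists_avoiding_two[OF card] by blast
  obtain k where k: "k \<noteq> l" "k \<noteq> m" using exists_avoiding_two[OF card] by blast
  obtain h where h: "h permutes UNIV" "h p = l" "h q = m" "h r = k"
    using permutation_extending_three[of p q r l m k] r k assms(2,3) by auto
  have "\<kappa> id (ebas l) (ebas m) = pact h (\<kappa> id (ebas p) (ebas q))"
    using kappa_equivariant[OF permutes_id h(1), of "ebas p" "ebas q"] conjugate_id[OF h(1)] h
    by (simp add: pact_ebas[OF h(1)])
  moreover have "inv h l = p" using h permutes_inverses(2)[OF h(1), of p] by simp
  ultimately show ?thesis by simp
qed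

lemma kappa_id_ebas_nth_other:
  assumes "l \<noteq> m" "y \<noteq> l" "y \<noteq> m"
  shows "\<kappa> id (ebas l) (ebas m) $ y = 0"
proof -
  define h where "h = swap l m"
  have h: "h permutes UNIV" unfolding h_def by (rule permutes_swap_id) auto
  have "pact h (\<kappa> id (ebas l) (ebas m)) = \<kappa> id (ebas m) (ebas l)"
    using kappa_equivariant[OF permutes_id h, of "ebas l" "ebas m"] conjugate_id[OF h]
    by (simp add: pact_ebas[OF h]) (simp add: h_def)
  also have "\<dots> = - \<kappa> id (ebas l) (ebas m)"
    by (rule alt_bilinear_skew[OF kappa_alt_bilinear[OF permutes_id]])
  finally have "pact h (\<kappa> id (ebas l) (ebas m)) $ y = - \<kappa> id (ebas l) (ebas m) $ y"
    by simp
  moreover have "inv h y = y" using assms(2,3) by (simp add: h_def)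
  ultimately show ?thesis by simp
qed

lemma kappa_id_ebas:
  assumes card: "CARD('n) \<ge> 3" and "p \<noteq> q"
  shows "\<kappa> id (ebas l) (ebas (m::'n)) = csmul (\<kappa> id (ebas p) (ebas q) $ p) (ebas l - ebas m)"
proof (cases "l = m")
  case True
  then show ?thesis
    using alt_bilinear_self[OF kappa_alt_bilinear[OF permutes_id]] by (simp add: vec_eq_iff)
next
  case False
  have "\<kappa> id (ebas l) (ebas m) $ m = - \<kappa> id (ebas m) (ebas l) $ m"
    using alt_bilinear_skew[OF kappa_alt_bilinear[OF permutes_id], of "ebas l" "ebas m"] by simp
  then show ?thesis
    using False kappa_id_ebas_nth_first[OF card _ assms(2)] kappa_id_ebas_nth_other[OF False]
    unfolding vec_eq_iff by (auto simp: ebas_nth)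
qed

lemma kappa_cycle3_nth:
  assumes d: "distinct [p, q, r]"
  defines "X \<equiv> \<kappa> (cycle3 p q r) (ebas p) (ebas q)"
  shows "X $ q = X $ p" "X $ r = X $ p"
    and "t \<notin> {p, q, r} \<Longrightarrow> t' \<notin> {p, q, r} \<Longrightarrow> X $ t = X $ t'"
proof -
  let ?c = "cycle3 p q r"
  note C = is_3cycleD[OF is_3cycle_cycle3[OF d]]
  have fixed: "X $ ?c x = X $ x" for x
    unfolding X_def using pact_fixed_nth[OF cycle3_permutes kappa_fixed[OF cycle3_permutes[of p q r]]] .
  show "X $ q = X $ p" using fixed[of p] C by simp
  show "X $ r = X $ p" using fixed[of q] fixed[of p] C by simp
  assume t: "t \<notin> {p, q, r}" and t': "t' \<notin> {p, q, r}"
  define h where "h = swap t t'"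
  have h: "h permutes UNIV" unfolding h_def by (rule permutes_swap_id) auto
  have hp: "h p = p" "h q = q" "h r = r" using t t' by (auto simp: h_def)
  have "h \<circ> ?c \<circ> inv h = ?c"
    using conjugate_eq_3cycle[OF is_3cycle_cycle3[OF d] is_3cycle_cycle3[OF d] h hp] .
  then have "pact h X = X"
    using kappa_equivariant[OF cycle3_permutes[of p q r] h, of "ebas p" "ebas q"] hp
    unfolding X_def by (simp add: pact_ebas[OF h])
  then have "pact h X $ t' = X $ t'" by simp
  moreover have "inv h t' = t" by (simp add: h_def)
  ultimately show "X $ t = X $ t'" by simp
qed

context
  fixes p q r :: 'n and a b :: complex
  assumes d: "distinct [p, q, r]"
    and a: "a = \<kappa> (cycle3 p q r) (ebas p) (ebas q) $ p"
    and b: "b = \<kappa> (cycle3 p q r) (ebas p) (ebas q) $ (SOME t. t \<notin> {p, q, r})"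
begin

lemma kappa_cycle3:
  "\<kappa> (cycle3 p q r) (ebas p) (ebas q) = tri_vec a b (cycle3 p q r)"
  unfolding vec_eq_iff
proof
  fix y
  let ?X = "\<kappa> (cycle3 p q r) (ebas p) (ebas q)"
  note C = is_3cycleD[OF is_3cycle_cycle3[OF d]]
  show "?X $ y = tri_vec a b (cycle3 p q r) $ y"
  proof (cases "y \<in> {p, q, r}")
    case True
    then show ?thesis
      using kappa_cycle3_nth(1,2)[OF d] a C(1-4) by (auto simp: tri_vec_def)
  next
    case False
    \<comment> \<open>if \<open>n = 3\<close> this case is void, and \<open>b\<close> is an unspecified value\<close>
    then have "(SOME t. t \<notin> {p, q, r}) \<notin> {p, q, r}"
      by (metis someI_ex)
    then show ?thesis
      using kappa_cycle3_nth(3)[OF d False] b C(5)[of y] False by (simp add: tri_vec_def)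
  qed
qed

lemma kappa_3cycle_adjacent:
  assumes g: "is_3cycle g i j k" "g permutes UNIV" and x: "g x \<noteq> x"
  shows "\<kappa> g (ebas x) (ebas (g x)) = tri_vec a b g"
proof -
  have gx: "is_3cycle g x (g x) (g (g x))" by (rule is_3cycle_at_moved[OF g(1) x])
  obtain h where h: "h permutes UNIV" "h p = x" "h q = g x" "h r = g (g x)"
    using permutation_extending_three[OF d is_3cycleD(1)[OF gx]] by blast
  have hg: "h \<circ> cycle3 p q r \<circ> inv h = g"
    by (rule conjugate_eq_3cycle[OF gx is_3cycle_cycle3[OF d] h])
  have "\<kappa> g (ebas x) (ebas (g x)) = pact h (\<kappa> (cycle3 p q r) (ebas p) (ebas q))"
    using kappa_equivariant[OF cycle3_permutes[of p q r] h(1), of "ebas p" "ebas q"] h hg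
    by (simp add: pact_ebas[OF h(1)])
  also have "\<dots> = tri_vec a b g"
    unfolding kappa_cycle3 tri_vec_pact[OF h(1)] hg ..
  finally show ?thesis .
qed

lemma kappa_3cycle_ebas:
  assumes g: "is_3cycle g i j k" "g permutes UNIV"
  shows "\<kappa> g (ebas l) (ebas m) = kbasis a b a1 g l m"
proof -
  have ab: "alt_bilinear (\<kappa> g)" by (rule kappa_alt_bilinear[OF g(2)])
  consider "g l = l \<or> g m = m" | "l = m" | "g l \<noteq> l" "g m \<noteq> m" "m = g l"
    | "g l \<noteq> l" "g m \<noteq> m" "l = g m" "m \<noteq> g l"
    using is_3cycle_adjacent[OF g(1)] by blast
  then show ?thesis
  proof cases
    case 1
    then show ?thesis
      using kappa_fixed_point[OF g(2) is_3cycle_not_id[OF g(1)]] kbasis_3cycle[OF g(1)] by simp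
  next
    case 2
    then show ?thesis using kbasis_3cycle[OF g(1)] alt_bilinear_self[OF ab] by simp
  next
    case 3
    then show ?thesis using kbasis_3cycle[OF g(1)] kappa_3cycle_adjacent[OF g, of l] by simp
  next
    case 4
    then show ?thesis
      using kbasis_3cycle[OF g(1)] kappa_3cycle_adjacent[OF g, of m]
        alt_bilinear_skew[OF ab, of "ebas l" "ebas m"] by simp
  qed
qed

end

lemma kappa_eq_kform:
  assumes card: "CARD('n) \<ge> 3"
  shows "\<exists>a b a1. \<forall>g. g permutes UNIV \<longrightarrow> \<kappa> g = kform a b a1 g"
proof -
  obtain p q r :: 'n where d: "distinct [p, q, r]" using exists_three_distinct[OF card] by blast
  define a1 where "a1 = \<kappa> id (ebas p) (ebas q) $ p"
  define a where "a = \<kappa> (cycle3 p q r) (ebas p) (ebas q) $ p"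
  define b where "b = \<kappa> (cycle3 p q r) (ebas p) (ebas q) $ (SOME t. t \<notin> {p, q, r})"
  have basis: "\<kappa> g (ebas l) (ebas m) = kbasis a b a1 g l m" if g: "g permutes UNIV" for g l m
  proof (cases g rule: id_3cycle_other_cases)
    case 1
    show ?thesis
      using kappa_id_ebas[OF card, of p q l m] d unfolding 1 kbasis_id a1_def by simp
  next
    case 2
    then show ?thesis using kappa_3cycle_ebas[OF d a_def b_def _ g] by blast
  next
    case 3
    then show ?thesis using kappa_not_3cycle[OF g] kbasis_other by simp
  qed
  have "\<kappa> g v w = kform a b a1 g v w" if g: "g permutes UNIV" for g v w
    unfolding alt_bilinear_ebas_expansion[OF kappa_alt_bilinear[OF g], of v w] kform_def
    using basis[OF g] by simp
  then show ?thesis by blast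
qed

end

subsection \<open>The cochains \<open>kform\<close> are pre-Drinfeld orbifold algebra maps\<close>

definition coord_sum :: "complex^'n::finite \<Rightarrow> complex" where
  "coord_sum v = (\<Sum>k\<in>UNIV. v $ k)"

definition cyc_wedge :: "'n \<Rightarrow> 'n \<Rightarrow> 'n \<Rightarrow> complex^'n::finite \<Rightarrow> complex^'n \<Rightarrow> complex" where
  "cyc_wedge i j k v w =
     v$i * w$j + v$j * w$k + v$k * w$i - v$j * w$i - v$k * w$j - v$i * w$k"

lemma kform_nth:
  "kform a b a1 g v w $ y = (\<Sum>l\<in>UNIV. \<Sum>m\<in>UNIV. v $ l * w $ m * kbasis a b a1 g l m $ y)"
  by (simp add: kform_def sum_component)

lemma sum_sum_ebas:
  "(\<Sum>l\<in>UNIV. \<Sum>m\<in>UNIV. v $ l * w $ m * (ebas i $ l * ebas j $ m)) = v $ i * w $ (j::'n::finite)"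
proof -
  have "(\<Sum>l\<in>UNIV. \<Sum>m\<in>UNIV. v $ l * w $ m * (ebas i $ l * ebas j $ m))
      = cdot v (ebas i) * cdot w (ebas j)"
    by (simp add: cdot_def sum_product mult_ac)
  then show ?thesis by simp
qed

lemma kform_id_nth: "kform a b a1 id v w $ y = a1 * (v $ y * coord_sum w - w $ y * coord_sum v)"
proof -
  have "kform a b a1 id v w $ y = a1 * (\<Sum>l\<in>UNIV. \<Sum>m\<in>UNIV. v $ l * w $ m * (ebas y $ l * 1))
      - a1 * (\<Sum>l\<in>UNIV. \<Sum>m\<in>UNIV. v $ l * w $ m * (1 * ebas y $ m))"
    unfolding kform_nth kbasis_id
    by (simp add: ebas_nth[of _ y] ebas_nth[of y] eq_commute[of y] sum_subtractf sum_distrib_left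
        ring_distribs mult_ac)
  also have "\<dots> = a1 * (cdot v (ebas y) * coord_sum w) - a1 * (coord_sum v * cdot w (ebas y))"
    unfolding coord_sum_def cdot_def sum_product by (simp add: mult_ac)
  finally show ?thesis by (simp add: algebra_simps)
qed

lemma kbasis_3cycle_nth:
  assumes g: "is_3cycle g i j k"
  shows "kbasis a b a1 g l m $ y = tri_vec a b g $ y *
    (ebas i $ l * ebas j $ m + ebas j $ l * ebas k $ m + ebas k $ l * ebas i $ m
     - ebas j $ l * ebas i $ m - ebas k $ l * ebas j $ m - ebas i $ l * ebas k $ m)"
proof -
  note G = is_3cycleD[OF g]
  consider "l \<noteq> i" "l \<noteq> j" "l \<noteq> k" | "m \<noteq> i" "m \<noteq> j" "m \<noteq> k"
    | "l = i \<or> l = j \<or> l = k" "m = i \<or> m = j \<or> m = k" by blast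
  then show ?thesis
  proof cases
    case 1
    then show ?thesis using kbasis_3cycle[OF g] G(5)[of l] by (simp add: ebas_nth)
  next
    case 2
    then show ?thesis using kbasis_3cycle[OF g] G(5)[of m] by (simp add: ebas_nth)
  next
    case 3
    have "i \<noteq> j" "j \<noteq> i" "i \<noteq> k" "k \<noteq> i" "j \<noteq> k" "k \<noteq> j" using G(1) by auto
    with 3 show ?thesis
      unfolding kbasis_3cycle[OF g] using G(2-4) by (elim disjE) (simp_all add: ebas_nth)
  qed
qed

lemma kform_3cycle:
  assumes g: "is_3cycle g i j k"
  shows "kform a b a1 g v w = csmul (cyc_wedge i j k v w) (tri_vec a b g)"
  unfolding vec_eq_iff
proof
  fix y
  let ?S = "\<lambda>p q. \<Sum>l\<in>UNIV. \<Sum>m\<in>UNIV. v $ l * w $ m * (ebas p $ l * ebas q $ m)"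
  have "kform a b a1 g v w $ y = tri_vec a b g $ y *
      (?S i j + ?S j k + ?S k i - ?S j i - ?S k j - ?S i k)"
    unfolding kform_nth kbasis_3cycle_nth[OF g]
    by (simp add: sum_distrib_left sum_subtractf sum.distrib ring_distribs mult_ac)
  then show "kform a b a1 g v w $ y = csmul (cyc_wedge i j k v w) (tri_vec a b g) $ y"
    unfolding sum_sum_ebas by (simp add: cyc_wedge_def mult_ac)
qed

lemma kform_other:
  assumes "g \<noteq> id" "\<nexists>i j k. is_3cycle g i j k"
  shows "kform a b a1 g v w = 0"
  unfolding vec_eq_iff kform_nth kbasis_other[OF assms] by simp

lemma kform_alt_bilinear: "alt_bilinear (kform a b a1 g)"
proof -
  have "kform a b a1 g v v = 0" for v
    by (cases g rule: id_3cycle_other_cases)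
      (auto simp: vec_eq_iff kform_id_nth kform_3cycle kform_other cyc_wedge_def)
  then show ?thesis
    unfolding alt_bilinear_def clinear_map_def vec_eq_iff
    by (simp add: kform_nth ring_distribs sum.distrib sum_distrib_left mult_ac)
qed

lemma coord_sum_pact: "h permutes UNIV \<Longrightarrow> coord_sum (pact h v) = coord_sum v"
  unfolding coord_sum_def using sum.permute[OF permutes_inv, of h UNIV "\<lambda>k. v $ k"]
  by (simp add: o_def)

lemma cyc_wedge_pact:
  "h permutes UNIV \<Longrightarrow> cyc_wedge (h i) (h j) (h k) (pact h v) (pact h w) = cyc_wedge i j k v w"
  by (simp add: cyc_wedge_def permutes_inverses)

lemma conjugate_eq_id_iff: "h permutes UNIV \<Longrightarrow> h \<circ> g \<circ> inv h = id \<longleftrightarrow> g = id"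
  by (metis conjugate_conjugate_inv conjugate_id permutes_inv)

lemma conjugate_is_3cycle_iff:
  assumes h: "h permutes UNIV"
  shows "(\<exists>i j k. is_3cycle (h \<circ> g \<circ> inv h) i j k) \<longleftrightarrow> (\<exists>i j k. is_3cycle g i j k)"
  using is_3cycle_conjugate[OF h] is_3cycle_conjugate[OF permutes_inv[OF h], of "h \<circ> g \<circ> inv h"]
  unfolding conjugate_conjugate_inv[OF h] by blast

lemma kform_equivariant:
  assumes g: "g permutes UNIV" and h: "h permutes UNIV"
  shows "pact h (kform a b a1 g v w) = kform a b a1 (h \<circ> g \<circ> inv h) (pact h v) (pact h w)"
proof (cases g rule: id_3cycle_other_cases)
  case 1
  show ?thesis
    unfolding 1 conjugate_id[OF h] vec_eq_iff by (simp add: kform_id_nth coord_sum_pact[OF h])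
next
  case (2 i j k)
  then show ?thesis
    unfolding kform_3cycle[OF 2] kform_3cycle[OF is_3cycle_conjugate[OF h 2]]
    by (simp add: pact_csmul cyc_wedge_pact[OF h] tri_vec_pact[OF h])
next
  case 3
  then have "h \<circ> g \<circ> inv h \<noteq> id" "\<nexists>i j k. is_3cycle (h \<circ> g \<circ> inv h) i j k"
    using conjugate_eq_id_iff[OF h] conjugate_is_3cycle_iff[OF h] by blast+
  with 3 show ?thesis
    by (simp add: kform_other vec_eq_iff)
qed

lemma kform_fixed:
  assumes g: "g permutes UNIV"
  shows "pact g (kform a b a1 g v w) = kform a b a1 g v w"
proof (cases g rule: id_3cycle_other_cases)
  case (2 i j k)
  then show ?thesis
    unfolding kform_3cycle[OF 2] by (simp add: pact_csmul tri_vec_pact[OF g] conjugate_self[OF g])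
qed (simp_all add: kform_other vec_eq_iff)

lemma cyc_wedge_cocycle_nth:
  assumes g3: "is_3cycle g i j k" and g: "g permutes UNIV"
  shows "cyc_wedge i j k v2 v3 * (pact g v1 - v1) $ y + cyc_wedge i j k v3 v1 * (pact g v2 - v2) $ y
       + cyc_wedge i j k v1 v2 * (pact g v3 - v3) $ y = 0"
proof -
  note G = is_3cycleD[OF g3]
  have inv_g: "inv g (g x) = x" for x using g by (simp add: permutes_inverses)
  consider "y = i" | "y = j" | "y = k" | "y \<noteq> i" "y \<noteq> j" "y \<noteq> k" by blast
  then show ?thesis
  proof cases
    case 1
    then have "inv g y = k" using inv_g[of k] G(4) by simp
    with 1 show ?thesis by (simp add: cyc_wedge_def algebra_simps)
  next
    case 2
    then have "inv g y = i" using inv_g[of i] G(2) by simp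
    with 2 show ?thesis by (simp add: cyc_wedge_def algebra_simps)
  next
    case 3
    then have "inv g y = j" using inv_g[of j] G(3) by simp
    with 3 show ?thesis by (simp add: cyc_wedge_def algebra_simps)
  next
    case 4
    then have "inv g y = y" using inv_g[of y] G(5) by simp
    then show ?thesis by simp
  qed
qed

lemma kform_cocycle:
  assumes g: "g permutes UNIV"
  shows "sprod (kform a b a1 g v2 v3) (pact g v1 - v1) + sprod (kform a b a1 g v3 v1) (pact g v2 - v2)
      + sprod (kform a b a1 g v1 v2) (pact g v3 - v3) = 0"
proof (cases g rule: id_3cycle_other_cases)
  case (2 i j k)
  let ?Z = "\<lambda>y. cyc_wedge i j k v2 v3 * (pact g v1 - v1) $ y
    + cyc_wedge i j k v3 v1 * (pact g v2 - v2) $ y + cyc_wedge i j k v1 v2 * (pact g v3 - v3) $ y"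
  have "(sprod (kform a b a1 g v2 v3) (pact g v1 - v1) + sprod (kform a b a1 g v3 v1) (pact g v2 - v2)
      + sprod (kform a b a1 g v1 v2) (pact g v3 - v3)) $ r $ c
      = tri_vec a b g $ r * ?Z c + tri_vec a b g $ c * ?Z r" for r c
    unfolding kform_3cycle[OF 2] by (simp add: algebra_simps)
  then show ?thesis
    unfolding vec_eq_iff cyc_wedge_cocycle_nth[OF 2 g] by simp
qed (simp_all add: kform_other vec_eq_iff)

theorem corollary4p7:
  fixes \<kappa> :: "'n::finite cochain"
  assumes "CARD('n) \<ge> 3"
  shows "pre_DOA_map \<kappa> \<longleftrightarrow>
    (\<exists>a b a1. \<forall>g. g permutes (UNIV::'n set) \<longrightarrow> \<kappa> g = kform a b a1 g)"
proof
  assume "pre_DOA_map \<kappa>"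
  then show "\<exists>a b a1. \<forall>g. g permutes UNIV \<longrightarrow> \<kappa> g = kform a b a1 g"
    using pre_DOA.kappa_eq_kform[OF _ assms] unfolding pre_DOA_def by blast
next
  assume "\<exists>a b a1. \<forall>g. g permutes (UNIV::'n set) \<longrightarrow> \<kappa> g = kform a b a1 g"
  then obtain a b a1 where \<kappa>: "\<And>g. g permutes UNIV \<Longrightarrow> \<kappa> g = kform a b a1 g" by blast
  show "pre_DOA_map \<kappa>"
    unfolding pre_DOA_map_def
  proof (intro conjI allI impI)
    fix g h :: "'n \<Rightarrow> 'n" and v w v1 v2 v3
    assume g: "g permutes UNIV"
    show "alt_bilinear (\<kappa> g)" using kform_alt_bilinear by (simp add: \<kappa>[OF g])
    show "pact g (\<kappa> g v w) = \<kappa> g v w" using kform_fixed[OF g] by (simp add: \<kappa>[OF g])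
    show "sprod (\<kappa> g v2 v3) (pact g v1 - v1) + sprod (\<kappa> g v3 v1) (pact g v2 - v2)
        + sprod (\<kappa> g v1 v2) (pact g v3 - v3) = 0"
      using kform_cocycle[OF g] by (simp add: \<kappa>[OF g])
    assume h: "h permutes UNIV"
    show "pact h (\<kappa> g v w) = \<kappa> (h \<circ> g \<circ> inv h) (pact h v) (pact h w)"
      using kform_equivariant[OF g h] by (simp add: \<kappa>[OF g] \<kappa>[OF permutes_conjugate[OF g h]])
  qed
qed
end
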